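(* Let $\varepsilon\in[0,1)$ and $\mathcal{P},\mathcal{E}\subseteq\mathcal{D}(P)$. Then $$\beta W_{\mathrm{GPO},\varepsilon}(\mathcal{P},\mathcal{E})=D^{\mathcal{E}}_{\min,\varepsilon}(\mathcal{P}\|\mathcal{E}).$$
   Context: All Hilbert spaces are finite-dimensional; $\mathcal{D}(P)$ is the set of density operators on $P$; $T(X,Y)=\tfrac12\|X-Y\|_1$. Battery: qubit $B$ with basis $\{|0\rangle,|1\rangle\}$, $\pi_M=(1-\tfrac1M)|0\rangle\langle0|+\tfrac1M|1\rangle\langle1|$ for $M>1$. For a class of maps $\mathfrak{F}$, the one-shot extractable work into a clean battery is $\beta W_{\mathfrak{F},\varepsilon}(\mathcal{P},\mathcal{E})=\log\sup\{M>1:\exists\mathcal{F}\in\mathfrak{F}\text{ with } T(\mathcal{F}(\rho),|1\rangle\langle1|)\le\varepsilon\ \forall\rho\in\mathcal{P}\text{ and }\mathcal{F}(\tau)=\pi_M\ \forall\tau\in\mathcal{E}\}$. GPO (Gibbs-preserving operations) here means the class of CPTP maps, the Gibbs-preservation requirement being exactly the condition $\mathcal{F}(\tau)=\pi_M$ for all $\tau\in\mathcal{E}$. For $\mathcal{K}$ a set of operators, $V(\mathcal{K})=\operatorname{span}\{\tau-\tau':\tau,\tau'\in\mathcal{K}\}$, and $E\perp V(\mathcal{K})$ means $\operatorname{tr}[EX]=0$ for all $X\in V(\mathcal{K})$. The subspace-constrained min-relative entropy is $$D^{\mathcal{K}}_{\min,\varepsilon}(\mathcal{P}\|\mathcal{E})=-\log\min\Big\{\sup_{\tau\in\mathcal{E}}\operatorname{tr}[\tau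 E]:0\le E\le I,\ E\perp V(\mathcal{K}),\ \sup_{\rho\in\mathcal{P}}\operatorname{tr}[\rho(I-E)]\le\varepsilon\Big\},$$ with $-\log 0=+\infty$. *)

theory Defs
  imports "Jordan_Normal_Form.Char_Poly" "Jordan_Normal_Form.Schur_Decomposition"
    "HOL-Library.Extended_Real"
begin

(* Operators on a d-dimensional Hilbert space P = C^d are complex d x d matrices. *)

definition mtrace :: "complex mat \<Rightarrow> complex" where
  "mtrace A = (\<Sum>i<dim_row A. A $$ (i, i))"

definition psd :: "nat \<Rightarrow> complex mat \<Rightarrow> bool" where
  "psd d A \<longleftrightarrow> A \<in> carrier_mat d d \<and> mat_adjoint A = A \<and>
     (\<forall>v \<in> carrier_vec d. Im (conjugate v \<bullet> (A *\<^sub>v v)) = 0 \<and> 0 \<le> Re (conjugate v \<bullet> (A *\<^sub>v v)))"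

definition dens :: "nat \<Rightarrow> complex mat set" where
  "dens d = {\<rho>. psd d \<rho> \<and> mtrace \<rho> = 1}"

(* trace norm = sum of singular values = sum of square roots of the eigenvalues
   (with algebraic multiplicity) of A^dagger A *)
definition trace_norm :: "complex mat \<Rightarrow> real" where
  "trace_norm A = (let B = mat_adjoint A * A in
     (\<Sum>\<mu> \<in> {\<mu>. poly (char_poly B) \<mu> = 0}. real (order \<mu> (char_poly B)) * sqrt (Re \<mu>)))"

definition trace_dist :: "complex mat \<Rightarrow> complex mat \<Rightarrow> real" where
  "trace_dist X Y = trace_norm (X - Y) / 2"

definition block :: "nat \<Rightarrow> complex mat \<Rightarrow> nat \<Rightarrow> nat \<Rightarrow> complex mat" where
  "block d X a b = mat d d (\<lambda>(r, s). X $$ (a * d + r, b * d + s))"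

(* (id_k \<otimes> F) applied to an operator on C^k \<otimes> C^d *)
definition ampl :: "nat \<Rightarrow> nat \<Rightarrow> nat \<Rightarrow> (complex mat \<Rightarrow> complex mat) \<Rightarrow> complex mat \<Rightarrow> complex mat" where
  "ampl k d e F X = mat (k * e) (k * e)
     (\<lambda>(i, j). F (block d X (i div e) (j div e)) $$ (i mod e, j mod e))"

definition cptp :: "nat \<Rightarrow> nat \<Rightarrow> (complex mat \<Rightarrow> complex mat) \<Rightarrow> bool" where
  "cptp d e F \<longleftrightarrow>
     (\<forall>X \<in> carrier_mat d d. F X \<in> carrier_mat e e) \<and>
     (\<forall>X \<in> carrier_mat d d. \<forall>Y \<in> carrier_mat d d. F (X + Y) = F X + F Y) \<and>
     (\<forall>X \<in> carrier_mat d d. \<forall>c. F (c \<cdot>\<^sub>m X) = c \<cdot>\<^sub>m F X) \<and>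
     (\<forall>X \<in> carrier_mat d d. mtrace (F X) = mtrace X) \<and>
     (\<forall>k. \<forall>X. psd (k * d) X \<longrightarrow> psd (k * e) (ampl k d e F X))"

definition proj0 :: "complex mat" where
  "proj0 = mat 2 2 (\<lambda>(i, j). if i = 0 \<and> j = 0 then 1 else 0)"

definition proj1 :: "complex mat" where
  "proj1 = mat 2 2 (\<lambda>(i, j). if i = 1 \<and> j = 1 then 1 else 0)"

definition piM :: "real \<Rightarrow> complex mat" where
  "piM M = complex_of_real (1 - 1 / M) \<cdot>\<^sub>m proj0 + complex_of_real (1 / M) \<cdot>\<^sub>m proj1"

definition elog :: "ereal \<Rightarrow> ereal" where
  "elog x = (if x = \<infinity> then \<infinity> else ereal (log 2 (real_of_ereal x)))"

definition eneglog :: "ereal \<Rightarrow> ereal" where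
  "eneglog x = (if x = 0 then \<infinity> else ereal (- log 2 (real_of_ereal x)))"

(* admissible battery sizes M > 1 for GPO (Gibbs-preserving CPTP maps) *)
definition gpo_M :: "nat \<Rightarrow> real \<Rightarrow> complex mat set \<Rightarrow> complex mat set \<Rightarrow> real set" where
  "gpo_M d eps Ps Es = {M. M > 1 \<and> (\<exists>F. cptp d 2 F \<and>
       (\<forall>\<rho> \<in> Ps. trace_dist (F \<rho>) proj1 \<le> eps) \<and> (\<forall>\<tau> \<in> Es. F \<tau> = piM M))}"

(* \<beta> W_{GPO,eps}(Ps, Es); the supremum over the empty set of M > 1 is read as 1 *)
definition betaW_GPO :: "nat \<Rightarrow> real \<Rightarrow> complex mat set \<Rightarrow> complex mat set \<Rightarrow> ereal" where
  "betaW_GPO d eps Ps Es = elog (Sup ({1} \<union> ereal ` gpo_M d eps Ps Es))"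

inductive_set Vspan :: "nat \<Rightarrow> complex mat set \<Rightarrow> complex mat set" for d K where
  zero: "0\<^sub>m d d \<in> Vspan d K"
| diff: "\<tau> \<in> K \<Longrightarrow> \<tau>' \<in> K \<Longrightarrow> \<tau> - \<tau>' \<in> Vspan d K"
| add: "X \<in> Vspan d K \<Longrightarrow> Y \<in> Vspan d K \<Longrightarrow> X + Y \<in> Vspan d K"
| smult: "X \<in> Vspan d K \<Longrightarrow> c \<cdot>\<^sub>m X \<in> Vspan d K"

definition perp :: "complex mat \<Rightarrow> complex mat set \<Rightarrow> bool" where
  "perp E V \<longleftrightarrow> (\<forall>X \<in> V. mtrace (E * X) = 0)"

definition Dmin_feasible :: "nat \<Rightarrow> real \<Rightarrow> complex mat set \<Rightarrow> complex mat set \<Rightarrow> complex mat set" where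
  "Dmin_feasible d eps Ps K = {E. psd d E \<and> psd d (1\<^sub>m d - E) \<and> perp E (Vspan d K) \<and>
       (\<forall>\<rho> \<in> Ps. Re (mtrace (\<rho> * (1\<^sub>m d - E))) \<le> eps)}"

(* sup_{\<tau> \<in> Es} tr[\<tau> E]; values are \<ge> 0, the supremum over an empty set is read as 0 *)
definition sup_tr :: "complex mat set \<Rightarrow> complex mat \<Rightarrow> ereal" where
  "sup_tr Es E = Sup ({0} \<union> {ereal (Re (mtrace (\<tau> * E))) | \<tau>. \<tau> \<in> Es})"

definition Dmin :: "nat \<Rightarrow> real \<Rightarrow> complex mat set \<Rightarrow> complex mat set \<Rightarrow> complex mat set \<Rightarrow> ereal" where
  "Dmin d eps Ps K Es = eneglog (Inf (sup_tr Es ` Dmin_feasible d eps Ps K))"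

end

theory Submission
  imports Defs "HOL-Library.Complex_Order"
begin

(* A GPO map F into the battery gives the effect E = F^dagger(|1><1|): complete positivity and trace
   preservation give 0 <= E <= I, the Gibbs condition F(tau) = pi_M forces tr[tau E] = 1/M for every
   Gibbs state tau (so E is orthogonal to their differences), and the error tr[rho (I - E)] is the
   |0><0|-entry of F(rho), which is at most the trace distance of F(rho) to |1><1|.
   Conversely, a feasible E takes a constant value c = tr[tau E] on the Gibbs states. If c < 1/M, the
   effect G = alpha E + (1 - alpha) I with alpha = (1 - 1/M) / (1 - c) has tr[tau G] = 1/M and error
   at most alpha * eps, so measuring {I - G, G} and preparing |0><0| resp. |1><1| is a GPO extracting
   M. Hence M is admissible if 1/M exceeds the optimal value m and only if 1/M >= m; the supremum of
   the admissible M is therefore 1/m, and the identity follows by taking logarithms. *)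

section \<open>Quadratic forms and positive semidefinite matrices\<close>

lemma complex_nonneg_iff: "0 \<le> (z::complex) \<longleftrightarrow> Im z = 0 \<and> 0 \<le> Re z"
  by (auto simp: less_eq_complex_def)

lemma complex_divide_nonneg: "0 \<le> (a::complex) \<Longrightarrow> 0 \<le> c \<Longrightarrow> 0 \<le> a / c"
  by (auto simp: complex_nonneg_iff Re_divide Im_divide)

lemma cnj_mult_self_nonneg: "0 \<le> cnj z * z"
  by (simp add: complex_nonneg_iff)

lemma sum_lessThan_single:
  fixes f :: "nat \<Rightarrow> 'a::comm_monoid_add"
  assumes "i < n" "\<And>l. l < n \<Longrightarrow> l \<noteq> i \<Longrightarrow> f l = 0"
  shows "(\<Sum>l<n. f l) = f i"
  using sum.mono_neutral_right[of "{..<n}" "{i}" f] assms by auto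

definition quad_form :: "nat \<Rightarrow> complex mat \<Rightarrow> (nat \<Rightarrow> complex) \<Rightarrow> complex" where
  "quad_form n A v = (\<Sum>i<n. \<Sum>j<n. cnj (v i) * A $$ (i, j) * v j)"

lemma quad_form_cong: "(\<And>i. i < n \<Longrightarrow> v i = w i) \<Longrightarrow> quad_form n A v = quad_form n A w"
  unfolding quad_form_def by (auto intro!: sum.cong)

lemma conjugate_scalar_prod_eq_quad_form:
  assumes "A \<in> carrier_mat n n" "v \<in> carrier_vec n"
  shows "conjugate v \<bullet> (A *\<^sub>v v) = quad_form n A (\<lambda>i. v $ i)"
  using assms unfolding quad_form_def scalar_prod_def
  by (auto simp: lessThan_atLeast0 sum_distrib_left mult.assoc scalar_prod_def intro!: sum.cong)

lemma quad_form_diff_unit: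
  assumes "k < n"
  shows "quad_form n A (\<lambda>l. v l - (if l = k then t else 0)) = quad_form n A v
    - cnj t * (\<Sum>j<n. A $$ (k, j) * v j) - (\<Sum>i<n. cnj (v i) * A $$ (i, k)) * t + cnj t * A $$ (k, k) * t"
proof -
  have if_out: "\<And>i g. (\<Sum>j<n. if i = k then g j else 0) = (if i = k then \<Sum>j<n. g j else 0)"
    by simp
  have "quad_form n A (\<lambda>l. v l - (if l = k then t else 0)) = (\<Sum>i<n. \<Sum>j<n. cnj (v i) * A $$ (i, j) * v j
      - (if i = k then cnj t * A $$ (k, j) * v j else 0) - (if j = k then cnj (v i) * A $$ (i, k) * t else 0)
      + (if i = k then if j = k then cnj t * A $$ (k, k) * t else 0 else 0))"
    unfolding quad_form_def by (intro sum.cong refl) (auto simp: algebra_simps)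
  then show ?thesis
    using assms by (simp add: if_out quad_form_def sum.distrib sum_subtractf sum_distrib_left sum_distrib_right mult.assoc)
qed

lemma quad_form_unit:
  assumes "i < n"
  shows "quad_form n A (\<lambda>l. if l = i then a else 0) = cnj a * A $$ (i, i) * a"
  using quad_form_diff_unit[OF assms, of A "\<lambda>_. 0" "-a"] by (simp add: quad_form_def if_distrib cong: if_cong)

lemma sum_lessThan_pair:
  fixes f :: "nat \<Rightarrow> 'a::comm_monoid_add"
  assumes "i \<noteq> j" "i < n" "j < n" "\<And>l. l < n \<Longrightarrow> l \<noteq> i \<Longrightarrow> l \<noteq> j \<Longrightarrow> f l = 0"
  shows "(\<Sum>l<n. f l) = f i + f j"
  using sum.mono_neutral_right[of "{..<n}" "{i, j}" f] assms by auto

lemma quad_form_pair: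
  assumes "i \<noteq> j" "i < n" "j < n"
  shows "quad_form n A (\<lambda>l. if l = i then a else if l = j then b else 0) =
    cnj a * A $$ (i, i) * a + cnj a * A $$ (i, j) * b + cnj b * A $$ (j, i) * a + cnj b * A $$ (j, j) * b"
  unfolding quad_form_def
  by (subst sum_lessThan_pair[OF assms], simp, subst (1 2) sum_lessThan_pair[OF assms])
    (use assms in auto)

lemma mat_adjoint_eq_iff:
  assumes A: "A \<in> carrier_mat n n"
  shows "mat_adjoint A = A \<longleftrightarrow> (\<forall>i<n. \<forall>j<n. A $$ (j, i) = cnj (A $$ (i, j)))"
proof -
  have adj_carrier: "mat_adjoint A \<in> carrier_mat n n"
    and adj: "\<And>i j. i < n \<Longrightarrow> j < n \<Longrightarrow> mat_adjoint A $$ (i, j) = cnj (A $$ (j, i))"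
    using A by (auto simp: mat_adjoint_def mat_of_rows_def)
  show ?thesis
  proof (intro iffI allI impI)
    fix i j assume "mat_adjoint A = A" "i < n" "j < n"
    then show "A $$ (j, i) = cnj (A $$ (i, j))" using adj[of j i] by simp
  next
    assume herm: "\<forall>i<n. \<forall>j<n. A $$ (j, i) = cnj (A $$ (i, j))"
    show "mat_adjoint A = A"
    proof (rule eq_matI)
      fix i j assume "i < dim_row A" "j < dim_col A"
      then have "i < n" "j < n" using A by auto
      then show "mat_adjoint A $$ (i, j) = A $$ (i, j)"
        using adj[of i j] herm[rule_format, of j i] by simp
    qed (use A adj_carrier in auto)
  qed
qed

lemma hermitian_if_quad_form_real:
  assumes real: "\<And>v. Im (quad_form n A v) = 0" and i: "i < n" and j: "j < n"
  shows "A $$ (j, i) = cnj (A $$ (i, j))"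
proof -
  have diag: "Im (A $$ (l, l)) = 0" if "l < n" for l
    using real[of "\<lambda>m. if m = l then 1 else 0"] quad_form_unit[OF that] by simp
  show ?thesis
  proof (cases "i = j")
    case True
    then show ?thesis using diag[OF i] by (simp add: complex_eq_iff)
  next
    case False
    have "Im (A $$ (i, i) + A $$ (i, j) + A $$ (j, i) + A $$ (j, j)) = 0"
      using real[of "\<lambda>l. if l = i then 1 else if l = j then 1 else 0"] quad_form_pair[OF False i j] by simp
    moreover have "Im (A $$ (i, i) + A $$ (i, j) * \<i> - \<i> * A $$ (j, i) + A $$ (j, j)) = 0"
      using real[of "\<lambda>l. if l = i then 1 else if l = j then \<i> else 0"] quad_form_pair[OF False i j] by simp
    ultimately show ?thesis using diag[OF i] diag[OF j] by (simp add: complex_eq_iff algebra_simps)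
  qed
qed

lemma psd_iff_quad_form: "psd n A \<longleftrightarrow> A \<in> carrier_mat n n \<and> (\<forall>v. 0 \<le> quad_form n A v)"
proof
  assume psd: "psd n A"
  then have A: "A \<in> carrier_mat n n" by (simp add: psd_def)
  have "0 \<le> quad_form n A v" for v
  proof -
    have "quad_form n A v = quad_form n A (\<lambda>i. vec n v $ i)" by (rule quad_form_cong) auto
    also have "\<dots> = conjugate (vec n v) \<bullet> (A *\<^sub>v vec n v)"
      using conjugate_scalar_prod_eq_quad_form[OF A] by simp
    finally show ?thesis using psd by (simp add: psd_def complex_nonneg_iff)
  qed
  with A show "A \<in> carrier_mat n n \<and> (\<forall>v. 0 \<le> quad_form n A v)" by blast
next
  assume "A \<in> carrier_mat n n \<and> (\<forall>v. 0 \<le> quad_form n A v)"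
  then have A: "A \<in> carrier_mat n n" and nonneg: "\<And>v. 0 \<le> quad_form n A v" by auto
  have "Im (quad_form n A v) = 0" for v
    using nonneg[of v] by (simp add: complex_nonneg_iff)
  then have "mat_adjoint A = A"
    unfolding mat_adjoint_eq_iff[OF A] using hermitian_if_quad_form_real by blast
  then show "psd n A"
    using A nonneg conjugate_scalar_prod_eq_quad_form[OF A] by (auto simp: psd_def complex_nonneg_iff)
qed

lemma psdI: "A \<in> carrier_mat n n \<Longrightarrow> (\<And>v. 0 \<le> quad_form n A v) \<Longrightarrow> psd n A"
  by (simp add: psd_iff_quad_form)

lemma psd_carrier: "psd n A \<Longrightarrow> A \<in> carrier_mat n n"
  by (simp add: psd_def)

lemma psd_quad_form_nonneg: "psd n A \<Longrightarrow> 0 \<le> quad_form n A v"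
  by (simp add: psd_iff_quad_form)

lemma psd_hermitian: "psd n A \<Longrightarrow> i < n \<Longrightarrow> j < n \<Longrightarrow> A $$ (j, i) = cnj (A $$ (i, j))"
  using mat_adjoint_eq_iff by (auto simp: psd_def)

lemma psd_diag_nonneg: "psd n A \<Longrightarrow> i < n \<Longrightarrow> 0 \<le> A $$ (i, i)"
  using psd_quad_form_nonneg[of n A "\<lambda>l. if l = i then 1 else 0"] quad_form_unit by simp

lemma psd_diag_real: "psd n A \<Longrightarrow> i < n \<Longrightarrow> cnj (A $$ (i, i)) = A $$ (i, i)"
  using psd_diag_nonneg by (simp add: complex_nonneg_iff complex_eq_iff)

lemma psd_row_zero_if_diag_zero:
  assumes psd: "psd n A" and i: "i < n" and j: "j < n" and zero: "A $$ (i, i) = 0"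
  shows "A $$ (i, j) = 0"
proof (rule ccontr)
  assume nz: "A $$ (i, j) \<noteq> 0"
  then have ij: "i \<noteq> j" using zero by auto
  define w where "w = A $$ (i, j)"
  define r where "r = (cmod w)\<^sup>2"
  have r: "r > 0" using nz unfolding r_def w_def by simp
  have ww: "cnj w * w = r" unfolding r_def complex_norm_square by (rule mult.commute)
  \<comment> \<open>As \<open>A\<^sub>i\<^sub>i = 0\<close>, the form at \<open>a e\<^sub>i + e\<^sub>j\<close> is affine in \<open>a\<close>; this choice of \<open>a\<close> makes it \<open>-1\<close>.\<close>
  define x where "x = (Re (A $$ (j, j)) + 1) / (2 * r)"
  define a where "a = - (complex_of_real x) * w"
  have "cnj a * w + cnj w * a = - 2 * x * r"
    unfolding a_def using ww by (simp add: algebra_simps)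
  moreover have "quad_form n A (\<lambda>l. if l = i then a else if l = j then 1 else 0) = cnj a * w + cnj w * a + A $$ (j, j)"
    using quad_form_pair[OF ij i j, of A a 1] zero psd_hermitian[OF psd i j] unfolding w_def by simp
  ultimately have "Re (quad_form n A (\<lambda>l. if l = i then a else if l = j then 1 else 0)) = Re (A $$ (j, j)) - 2 * x * r"
    by simp
  also have "\<dots> = -1"
    using r unfolding x_def by (simp add: field_simps)
  finally show False
    using psd_quad_form_nonneg[OF psd, of "\<lambda>l. if l = i then a else if l = j then 1 else 0"]
    by (simp add: complex_nonneg_iff)
qed

lemma quad_form_add:
  "A \<in> carrier_mat n n \<Longrightarrow> B \<in> carrier_mat n n \<Longrightarrow> quad_form n (A + B) v = quad_form n A v + quad_form n B v"
  unfolding quad_form_def by (simp add: algebra_simps sum.distrib)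

lemma quad_form_smult: "A \<in> carrier_mat n n \<Longrightarrow> quad_form n (c \<cdot>\<^sub>m A) v = c * quad_form n A v"
  unfolding quad_form_def by (simp add: algebra_simps sum_distrib_left)

lemma quad_form_one: "quad_form n (1\<^sub>m n) v = (\<Sum>i<n. cnj (v i) * v i)"
  unfolding quad_form_def by (intro sum.cong refl, subst sum_lessThan_single) auto

lemma psd_add: "psd n A \<Longrightarrow> psd n B \<Longrightarrow> psd n (A + B)"
  by (auto simp: psd_iff_quad_form quad_form_add)

lemma psd_smult: "0 \<le> c \<Longrightarrow> psd n A \<Longrightarrow> psd n (c \<cdot>\<^sub>m A)"
  by (auto simp: psd_iff_quad_form quad_form_smult)

lemma psd_one: "psd n (1\<^sub>m n)"
  by (auto simp: psd_iff_quad_form quad_form_one cnj_mult_self_nonneg intro: sum_nonneg)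

lemma psd_zero: "psd n (0\<^sub>m n n)"
  by (auto simp: psd_iff_quad_form quad_form_def)

definition outer_prod :: "nat \<Rightarrow> (nat \<Rightarrow> complex) \<Rightarrow> complex mat" where
  "outer_prod n v = mat n n (\<lambda>(i, j). v i * cnj (v j))"

lemma psd_outer_prod: "psd n (outer_prod n v)"
proof (rule psdI)
  fix u
  define z where "z = (\<Sum>i<n. cnj (u i) * v i)"
  have "z * cnj z = (\<Sum>i<n. \<Sum>j<n. (cnj (u i) * v i) * (u j * cnj (v j)))"
    unfolding z_def by (simp add: sum_product)
  also have "\<dots> = quad_form n (outer_prod n v) u"
    unfolding quad_form_def outer_prod_def by (auto intro!: sum.cong simp: algebra_simps)
  finally have "quad_form n (outer_prod n v) u = z * cnj z" ..
  then show "0 \<le> quad_form n (outer_prod n v) u"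
    using cnj_mult_self_nonneg[of z] by (simp add: mult.commute)
qed (simp add: outer_prod_def)

section \<open>The trace pairing\<close>

definition trace_prod :: "nat \<Rightarrow> complex mat \<Rightarrow> complex mat \<Rightarrow> complex" where
  "trace_prod n A B = (\<Sum>p<n. \<Sum>q<n. A $$ (p, q) * B $$ (q, p))"

lemma mtrace_mult: "A \<in> carrier_mat n n \<Longrightarrow> B \<in> carrier_mat n n \<Longrightarrow> mtrace (A * B) = trace_prod n A B"
  unfolding mtrace_def trace_prod_def by (simp add: scalar_prod_def lessThan_atLeast0)

lemma trace_prod_comm: "trace_prod n A B = trace_prod n B A"
  unfolding trace_prod_def by (subst sum.swap) (simp add: mult.commute)

lemma trace_prod_zero: "trace_prod n A (0\<^sub>m n n) = 0"
  unfolding trace_prod_def by (intro sum.neutral ballI) simp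

lemma trace_prod_add:
  "X \<in> carrier_mat n n \<Longrightarrow> Y \<in> carrier_mat n n \<Longrightarrow> trace_prod n A (X + Y) = trace_prod n A X + trace_prod n A Y"
  unfolding trace_prod_def by (simp add: algebra_simps sum.distrib)

lemma trace_prod_minus:
  "X \<in> carrier_mat n n \<Longrightarrow> Y \<in> carrier_mat n n \<Longrightarrow> trace_prod n A (X - Y) = trace_prod n A X - trace_prod n A Y"
  unfolding trace_prod_def by (simp add: algebra_simps sum_subtractf)

lemma trace_prod_smult: "X \<in> carrier_mat n n \<Longrightarrow> trace_prod n A (c \<cdot>\<^sub>m X) = c * trace_prod n A X"
  unfolding trace_prod_def by (simp add: algebra_simps sum_distrib_left)

lemma trace_prod_add_left:
  "A \<in> carrier_mat n n \<Longrightarrow> B \<in> carrier_mat n n \<Longrightarrow> trace_prod n (A + B) X = trace_prod n A X + trace_prod n B X"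
  unfolding trace_prod_def by (simp add: algebra_simps sum.distrib)

lemma trace_prod_smult_left: "A \<in> carrier_mat n n \<Longrightarrow> trace_prod n (c \<cdot>\<^sub>m A) X = c * trace_prod n A X"
  unfolding trace_prod_def by (simp add: algebra_simps sum_distrib_left)

lemma trace_prod_one:
  assumes "X \<in> carrier_mat n n"
  shows "trace_prod n (1\<^sub>m n) X = mtrace X"
proof -
  have "trace_prod n (1\<^sub>m n) X = (\<Sum>p<n. X $$ (p, p))"
    unfolding trace_prod_def by (intro sum.cong refl, subst sum_lessThan_single) auto
  then show ?thesis using assms by (simp add: mtrace_def)
qed

lemma trace_prod_one_minus:
  assumes "G \<in> carrier_mat d d" "X \<in> carrier_mat d d"
  shows "trace_prod d (1\<^sub>m d - G) X = mtrace X - trace_prod d G X"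
  using assms trace_prod_minus[of _ d, OF one_carrier_mat, of G X] trace_prod_one[of X d]
  by (simp add: trace_prod_comm[of d _ X])

lemma quad_form_eq_trace_prod: "quad_form n A v = trace_prod n A (outer_prod n v)"
  unfolding quad_form_def trace_prod_def outer_prod_def
  by (auto intro!: sum.cong simp: algebra_simps)

definition schur_reduce :: "nat \<Rightarrow> complex mat \<Rightarrow> nat \<Rightarrow> complex mat" where
  "schur_reduce n Y k = mat n n (\<lambda>(i, j). Y $$ (i, j) - Y $$ (i, k) * Y $$ (k, j) / Y $$ (k, k))"

lemma psd_schur_reduce:
  assumes Y: "psd n Y" and k: "k < n"
  shows "psd n (schur_reduce n Y k)"
proof (rule psdI)
  show "schur_reduce n Y k \<in> carrier_mat n n" by (simp add: schur_reduce_def)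
next
  fix v
  define c where "c = Y $$ (k, k)"
  define s where "s = (\<Sum>j<n. Y $$ (k, j) * v j)"
  have c: "cnj c = c" unfolding c_def by (rule psd_diag_real[OF Y k])
  have col: "(\<Sum>i<n. cnj (v i) * Y $$ (i, k)) = cnj s"
    unfolding s_def by (auto intro!: sum.cong simp: psd_hermitian[OF Y k] mult.commute)
  have "quad_form n (schur_reduce n Y k) v
      = quad_form n Y v - (\<Sum>i<n. cnj (v i) * Y $$ (i, k)) * (\<Sum>j<n. Y $$ (k, j) * v j) / c"
    unfolding quad_form_def schur_reduce_def c_def sum_product sum_divide_distrib sum_subtractf[symmetric]
    by (auto intro!: sum.cong simp: algebra_simps)
  \<comment> \<open>For \<open>c = 0\<close> the reduction does nothing, as \<open>x / 0 = 0\<close>; otherwise complete the square.\<close>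
  also have "\<dots> = quad_form n Y (\<lambda>l. v l - (if l = k then s / c else 0))"
    unfolding quad_form_diff_unit[OF k] col s_def[symmetric] c_def[symmetric]
    using c by (cases "c = 0") (simp_all add: field_simps)
  finally show "0 \<le> quad_form n (schur_reduce n Y k) v"
    using psd_quad_form_nonneg[OF Y] by simp
qed

lemma schur_reduce_diag_support:
  assumes Y: "psd n Y" and k: "k < n" and c: "Y $$ (k, k) \<noteq> 0"
  shows "{i. i < n \<and> schur_reduce n Y k $$ (i, i) \<noteq> 0} \<subset> {i. i < n \<and> Y $$ (i, i) \<noteq> 0}"
proof
  show "{i. i < n \<and> schur_reduce n Y k $$ (i, i) \<noteq> 0} \<subseteq> {i. i < n \<and> Y $$ (i, i) \<noteq> 0}"
    using psd_row_zero_if_diag_zero[OF Y _ k] by (auto simp: schur_reduce_def)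
  have "schur_reduce n Y k $$ (k, k) = 0" using k c by (simp add: schur_reduce_def)
  then show "{i. i < n \<and> schur_reduce n Y k $$ (i, i) \<noteq> 0} \<noteq> {i. i < n \<and> Y $$ (i, i) \<noteq> 0}"
    using k c by blast
qed

lemma trace_prod_schur_reduce:
  assumes Y: "psd n Y" and k: "k < n"
  shows "trace_prod n G Y = trace_prod n G (schur_reduce n Y k) + quad_form n G (\<lambda>p. Y $$ (p, k)) / Y $$ (k, k)"
proof -
  have "trace_prod n G (schur_reduce n Y k)
      = trace_prod n G Y - (\<Sum>p<n. \<Sum>q<n. cnj (Y $$ (p, k)) * G $$ (p, q) * Y $$ (q, k)) / Y $$ (k, k)"
    unfolding trace_prod_def schur_reduce_def sum_divide_distrib sum_subtractf[symmetric]
    by (auto intro!: sum.cong simp: psd_hermitian[OF Y _ k] algebra_simps)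
  then show ?thesis by (simp add: quad_form_def)
qed

text \<open>Positivity of \<open>tr[G Y]\<close> without the spectral theorem: each Schur reduction of \<open>Y\<close> splits off
  a rank-one part \<open>Y e\<^sub>k e\<^sub>k\<^sup>* Y / Y\<^sub>k\<^sub>k\<close>, whose pairing with \<open>G\<close> is a value of the quadratic form of \<open>G\<close>,
  and strictly shrinks the support of the diagonal of \<open>Y\<close>.\<close>

lemma trace_prod_psd_nonneg:
  assumes G: "psd n G" and Y: "psd n Y"
  shows "0 \<le> trace_prod n G Y"
  using Y
proof (induction "card {i. i < n \<and> Y $$ (i, i) \<noteq> 0}" arbitrary: Y rule: less_induct)
  case less
  show ?case
  proof (cases "\<exists>k<n. Y $$ (k, k) \<noteq> 0")
    case False
    then have "Y $$ (q, p) = 0" if "p < n" "q < n" for p q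
      using psd_row_zero_if_diag_zero[OF less.prems] that by blast
    then show ?thesis by (simp add: trace_prod_def)
  next
    case True
    then obtain k where k: "k < n" and c: "Y $$ (k, k) \<noteq> 0" by blast
    have "card {i. i < n \<and> schur_reduce n Y k $$ (i, i) \<noteq> 0} < card {i. i < n \<and> Y $$ (i, i) \<noteq> 0}"
      by (rule psubset_card_mono[OF _ schur_reduce_diag_support[OF less.prems k c]]) simp
    then have "0 \<le> trace_prod n G (schur_reduce n Y k)"
      by (rule less.hyps[OF _ psd_schur_reduce[OF less.prems k]])
    moreover have "0 \<le> quad_form n G (\<lambda>p. Y $$ (p, k)) / Y $$ (k, k)"
      using psd_quad_form_nonneg[OF G] psd_diag_nonneg[OF less.prems k] by (rule complex_divide_nonneg)
    ultimately show ?thesis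
      unfolding trace_prod_schur_reduce[OF less.prems k] by (rule add_nonneg_nonneg)
  qed
qed

section \<open>Trace distance to the charged battery state\<close>

lemma mtrace_2: "A \<in> carrier_mat 2 2 \<Longrightarrow> mtrace A = A $$ (0, 0) + A $$ (1, 1)"
  by (simp add: mtrace_def numeral_2_eq_2)

lemma trace_dist_proj1:
  assumes R: "psd 2 R" and tr: "mtrace R = 1"
  shows "trace_dist R proj1 = sqrt ((Re (R $$ (0, 0)))\<^sup>2 + (cmod (R $$ (0, 1)))\<^sup>2)"
proof -
  define a where "a = Re (R $$ (0, 0))"
  define b where "b = R $$ (0, 1)"
  define r where "r = a\<^sup>2 + (cmod b)\<^sup>2"
  define A where "A = R - proj1"
  have cR: "R \<in> carrier_mat 2 2" using R by (rule psd_carrier)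
  have R00: "R $$ (0, 0) = a" unfolding a_def using psd_diag_real[OF R, of 0] by (simp add: complex_eq_iff)
  have R10: "R $$ (1, 0) = cnj b" unfolding b_def using psd_hermitian[OF R, of 0 1] by simp
  have R11: "R $$ (1, 1) = 1 - a" using tr R00 mtrace_2[OF cR] by (simp add: algebra_simps)
  have cA: "A \<in> carrier_mat 2 2" unfolding A_def proj1_def using cR by (intro minus_carrier_mat) simp_all
  have A: "A $$ (0, 0) = a" "A $$ (0, 1) = b" "A $$ (1, 0) = cnj b" "A $$ (1, 1) = - a"
    using cR R00 R10 R11 unfolding A_def proj1_def b_def by auto
  have adj: "mat_adjoint A = A"
    unfolding mat_adjoint_eq_iff[OF cA] using A by (auto simp: less_2_cases_iff)
  \<comment> \<open>\<open>R - |1\<rangle>\<langle>1|\<close> is traceless and hermitian, so its square is a multiple of the identity.\<close>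
  have B: "mat_adjoint A * A = mat 2 2 (\<lambda>(i, j). if i = j then complex_of_real r else 0)"
  proof (intro eq_matI)
    fix i j assume "i < dim_row (mat 2 2 (\<lambda>(i, j). if i = j then complex_of_real r else 0))"
      "j < dim_col (mat 2 2 (\<lambda>(i, j). if i = j then complex_of_real r else 0))"
    then have "i = 0 \<or> i = 1" "j = 0 \<or> j = 1" by auto
    then show "(mat_adjoint A * A) $$ (i, j) = mat 2 2 (\<lambda>(i, j). if i = j then complex_of_real r else 0) $$ (i, j)"
      using adj cA A complex_norm_square[of b]
      by (auto simp: scalar_prod_def numeral_2_eq_2 r_def power2_eq_square algebra_simps)
  qed (use cA adj in simp_all)
  have cp: "char_poly (mat_adjoint A * A) = [:- complex_of_real r, 1:] ^ 2"
    unfolding B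
    by (subst char_poly_upper_triangular)
      (auto simp: upper_triangular_def diag_mat_def numeral_2_eq_2 upt_rec power2_eq_square)
  have "{\<mu>. poly (char_poly (mat_adjoint A * A)) \<mu> = 0} = {complex_of_real r}"
    unfolding cp by auto
  then have "trace_norm A = 2 * sqrt r"
    unfolding trace_norm_def Let_def cp order_power_n_n by simp
  then show ?thesis unfolding trace_dist_def A_def[symmetric] r_def a_def b_def by simp
qed

lemma Re_entry_le_trace_dist_proj1:
  assumes "psd 2 R" "mtrace R = 1"
  shows "Re (R $$ (0, 0)) \<le> trace_dist R proj1"
  unfolding trace_dist_proj1[OF assms] by (rule real_sqrt_sum_squares_ge1)

section \<open>Measure-and-prepare channels\<close>

lemma sum_lessThan_mult:
  fixes f :: "nat \<Rightarrow> 'a::comm_monoid_add"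
  shows "(\<Sum>i<k * m. f i) = (\<Sum>a<k. \<Sum>r<m. f (a * m + r))"
proof -
  have "(\<Sum>i<k * m. f i) = (\<Sum>a<k. sum f {a * m..<a * m + m})"
    using sum.nat_group[of f m k] by (simp add: mult.commute)
  also have "\<dots> = (\<Sum>a<k. \<Sum>r<m. f (a * m + r))"
  proof (rule sum.cong[OF refl])
    fix a
    have "sum f {a * m..<a * m + m} = sum f {0 + a * m..<m + a * m}" by (simp add: add.commute)
    also have "\<dots> = (\<Sum>r = 0..<m. f (r + a * m))" by (rule sum.shift_bounds_nat_ivl)
    finally show "sum f {a * m..<a * m + m} = (\<Sum>r<m. f (a * m + r))"
      by (simp add: lessThan_atLeast0 add.commute)
  qed
  finally show ?thesis .
qed

lemma block_index_less: "a < k \<Longrightarrow> r < e \<Longrightarrow> a * e + r < k * (e::nat)"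
proof -
  assume "a < k" "r < e"
  then have "a * e + r < (a + 1) * e" by simp
  also have "\<dots> \<le> k * e" using \<open>a < k\<close> by (intro mult_le_mono1) simp
  finally show ?thesis .
qed

text \<open>\<open>block_compress k d X u\<close> is \<open>(u\<^sup>* \<otimes> I) X (u \<otimes> I)\<close> for \<open>X\<close> on \<open>\<complex>\<^sup>k \<otimes> \<complex>\<^sup>d\<close>.\<close>

definition block_compress :: "nat \<Rightarrow> nat \<Rightarrow> complex mat \<Rightarrow> (nat \<Rightarrow> complex) \<Rightarrow> complex mat" where
  "block_compress k d X u = mat d d (\<lambda>(p, q). \<Sum>a<k. \<Sum>b<k. cnj (u a) * u b * X $$ (a * d + p, b * d + q))"

lemma quad_form_block_compress:
  "quad_form d (block_compress k d X u) w = quad_form (k * d) X (\<lambda>i. u (i div d) * w (i mod d))"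
proof -
  have "quad_form (k * d) X (\<lambda>i. u (i div d) * w (i mod d))
      = (\<Sum>a<k. \<Sum>p<d. \<Sum>b<k. \<Sum>q<d. cnj (u a * w p) * X $$ (a * d + p, b * d + q) * (u b * w q))"
    unfolding quad_form_def sum_lessThan_mult[of _ k d] by (intro sum.cong refl) simp
  also have "\<dots> = (\<Sum>p<d. \<Sum>a<k. \<Sum>q<d. \<Sum>b<k. cnj (u a * w p) * X $$ (a * d + p, b * d + q) * (u b * w q))"
    by (subst sum.swap) (intro sum.cong refl sum.swap)
  also have "\<dots> = (\<Sum>p<d. \<Sum>q<d. \<Sum>a<k. \<Sum>b<k. cnj (u a * w p) * X $$ (a * d + p, b * d + q) * (u b * w q))"
    by (intro sum.cong refl sum.swap)
  also have "\<dots> = quad_form d (block_compress k d X u) w"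
    unfolding quad_form_def block_compress_def
    by (auto intro!: sum.cong simp: sum_distrib_left sum_distrib_right algebra_simps)
  finally show ?thesis by simp
qed

lemma psd_block_compress:
  assumes "psd (k * d) X"
  shows "psd d (block_compress k d X u)"
proof (rule psdI)
  show "block_compress k d X u \<in> carrier_mat d d" by (simp add: block_compress_def)
  show "0 \<le> quad_form d (block_compress k d X u) w" for w
    unfolding quad_form_block_compress by (rule psd_quad_form_nonneg[OF assms])
qed

lemma trace_prod_block_compress:
  "trace_prod d H (block_compress k d X u) = (\<Sum>a<k. \<Sum>b<k. cnj (u a) * trace_prod d H (block d X a b) * u b)"
proof -
  have "trace_prod d H (block_compress k d X u)
      = (\<Sum>p<d. \<Sum>q<d. \<Sum>a<k. \<Sum>b<k. cnj (u a) * (H $$ (p, q) * X $$ (a * d + q, b * d + p)) * u b)"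
    unfolding trace_prod_def block_compress_def
    by (auto intro!: sum.cong simp: sum_distrib_left algebra_simps)
  also have "\<dots> = (\<Sum>p<d. \<Sum>a<k. \<Sum>q<d. \<Sum>b<k. cnj (u a) * (H $$ (p, q) * X $$ (a * d + q, b * d + p)) * u b)"
    by (intro sum.cong refl sum.swap)
  also have "\<dots> = (\<Sum>a<k. \<Sum>p<d. \<Sum>b<k. \<Sum>q<d. cnj (u a) * (H $$ (p, q) * X $$ (a * d + q, b * d + p)) * u b)"
    by (subst sum.swap) (intro sum.cong refl sum.swap)
  also have "\<dots> = (\<Sum>a<k. \<Sum>b<k. \<Sum>p<d. \<Sum>q<d. cnj (u a) * (H $$ (p, q) * X $$ (a * d + q, b * d + p)) * u b)"
    by (intro sum.cong refl sum.swap)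
  also have "\<dots> = (\<Sum>a<k. \<Sum>b<k. cnj (u a) * trace_prod d H (block d X a b) * u b)"
    unfolding trace_prod_def block_def
    by (auto intro!: sum.cong simp: sum_distrib_left sum_distrib_right)
  finally show ?thesis .
qed

definition qc_channel :: "nat \<Rightarrow> nat \<Rightarrow> (nat \<Rightarrow> complex mat) \<Rightarrow> complex mat \<Rightarrow> complex mat" where
  "qc_channel d e H X = mat e e (\<lambda>(i, j). if i = j then trace_prod d (H i) X else 0)"

lemma psd_ampl_qc_channel:
  assumes H: "\<And>r. r < e \<Longrightarrow> psd d (H r)" and X: "psd (k * d) X"
  shows "psd (k * e) (ampl k d e (qc_channel d e H) X)"
proof (rule psdI)
  let ?Z = "ampl k d e (qc_channel d e H) X"
  show "?Z \<in> carrier_mat (k * e) (k * e)" by (simp add: ampl_def)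
  fix v
  have Z: "?Z $$ (a * e + r, b * e + s) = (if r = s then trace_prod d (H r) (block d X a b) else 0)"
    if "a < k" "b < k" "r < e" "s < e" for a b r s
  proof -
    have "a * e + r < k * e" "b * e + s < k * e"
      using that by (simp_all add: block_index_less)
    then show ?thesis using that by (simp add: ampl_def qc_channel_def)
  qed
  have "quad_form (k * e) ?Z v
      = (\<Sum>a<k. \<Sum>r<e. \<Sum>b<k. \<Sum>s<e. cnj (v (a * e + r)) * ?Z $$ (a * e + r, b * e + s) * v (b * e + s))"
    unfolding quad_form_def sum_lessThan_mult[of _ k e] ..
  also have "\<dots> = (\<Sum>a<k. \<Sum>r<e. \<Sum>b<k. cnj (v (a * e + r)) * trace_prod d (H r) (block d X a b) * v (b * e + r))"
    by (intro sum.cong refl, subst sum_lessThan_single) (auto simp: Z)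
  also have "\<dots> = (\<Sum>r<e. trace_prod d (H r) (block_compress k d X (\<lambda>a. v (a * e + r))))"
    unfolding trace_prod_block_compress by (rule sum.swap)
  also have "0 \<le> \<dots>"
    by (intro sum_nonneg trace_prod_psd_nonneg H psd_block_compress X) simp
  finally show "0 \<le> quad_form (k * e) ?Z v" .
qed

lemma cptp_qc_channel:
  assumes H: "\<And>r. r < e \<Longrightarrow> psd d (H r)"
    and total: "\<And>X. X \<in> carrier_mat d d \<Longrightarrow> (\<Sum>r<e. trace_prod d (H r) X) = mtrace X"
  shows "cptp d e (qc_channel d e H)"
  unfolding cptp_def
proof (intro conjI ballI allI impI)
  fix X Y :: "complex mat" and c :: complex
  assume X: "X \<in> carrier_mat d d"
  show "qc_channel d e H X \<in> carrier_mat e e" by (simp add: qc_channel_def)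
  show "qc_channel d e H (c \<cdot>\<^sub>m X) = c \<cdot>\<^sub>m qc_channel d e H X"
    by (rule eq_matI) (auto simp: qc_channel_def trace_prod_smult[OF X])
  show "mtrace (qc_channel d e H X) = mtrace X"
    using total[OF X] by (simp add: qc_channel_def mtrace_def)
  assume Y: "Y \<in> carrier_mat d d"
  show "qc_channel d e H (X + Y) = qc_channel d e H X + qc_channel d e H Y"
    by (rule eq_matI) (auto simp: qc_channel_def trace_prod_add[OF X Y])
next
  show "psd (k * d) X \<Longrightarrow> psd (k * e) (ampl k d e (qc_channel d e H) X)" for k X
    by (rule psd_ampl_qc_channel[OF H])
qed

section \<open>Completely positive trace-preserving maps\<close>

definition matrix_unit :: "nat \<Rightarrow> nat \<Rightarrow> nat \<Rightarrow> complex mat" where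
  "matrix_unit d i j = mat d d (\<lambda>(r, s). if r = i \<and> s = j then 1 else 0)"

definition entries_on :: "nat \<Rightarrow> complex mat \<Rightarrow> (nat \<times> nat) set \<Rightarrow> complex mat" where
  "entries_on d X S = mat d d (\<lambda>(r, s). if (r, s) \<in> S then X $$ (r, s) else 0)"

lemma entries_on_empty: "entries_on d X {} = 0\<^sub>m d d"
  by (auto simp: entries_on_def)

lemma entries_on_insert:
  "(i, j) \<notin> S \<Longrightarrow> entries_on d X (insert (i, j) S) = X $$ (i, j) \<cdot>\<^sub>m matrix_unit d i j + entries_on d X S"
  by (auto simp: entries_on_def matrix_unit_def)

lemma entries_on_all: "X \<in> carrier_mat d d \<Longrightarrow> entries_on d X ({..<d} \<times> {..<d}) = X"
  by (auto simp: entries_on_def)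

lemma cptp_carrier: "cptp d e F \<Longrightarrow> X \<in> carrier_mat d d \<Longrightarrow> F X \<in> carrier_mat e e"
  and cptp_add: "cptp d e F \<Longrightarrow> X \<in> carrier_mat d d \<Longrightarrow> Y \<in> carrier_mat d d \<Longrightarrow> F (X + Y) = F X + F Y"
  and cptp_smult: "cptp d e F \<Longrightarrow> X \<in> carrier_mat d d \<Longrightarrow> F (c \<cdot>\<^sub>m X) = c \<cdot>\<^sub>m F X"
  and cptp_mtrace: "cptp d e F \<Longrightarrow> X \<in> carrier_mat d d \<Longrightarrow> mtrace (F X) = mtrace X"
  and cptp_ampl_psd: "cptp d e F \<Longrightarrow> psd (k * d) X \<Longrightarrow> psd (k * e) (ampl k d e F X)"
  by (simp_all add: cptp_def)

lemma cptp_zero: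
  assumes F: "cptp d e F"
  shows "F (0\<^sub>m d d) = 0\<^sub>m e e"
proof -
  have "F (0\<^sub>m d d) = F (0 \<cdot>\<^sub>m 0\<^sub>m d d)" by simp
  also have "\<dots> = 0 \<cdot>\<^sub>m F (0\<^sub>m d d)" by (rule cptp_smult[OF F]) simp
  also have "\<dots> = 0\<^sub>m e e" using cptp_carrier[OF F, of "0\<^sub>m d d"] by (intro eq_matI) auto
  finally show ?thesis .
qed

lemma cptp_entries_on:
  assumes F: "cptp d e F" and S: "finite S" and ab: "a < e" "b < e"
  shows "F (entries_on d X S) $$ (a, b) = (\<Sum>(i, j)\<in>S. X $$ (i, j) * F (matrix_unit d i j) $$ (a, b))"
  using S
proof (induction rule: finite_induct)
  case empty
  then show ?case using cptp_zero[OF F] ab by (simp add: entries_on_empty)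
next
  case (insert ij S)
  obtain i j where ij: "ij = (i, j)" by (cases ij)
  have U: "matrix_unit d i j \<in> carrier_mat d d" and S: "entries_on d X S \<in> carrier_mat d d"
    by (simp_all add: matrix_unit_def entries_on_def)
  have "F (entries_on d X (insert ij S)) = X $$ (i, j) \<cdot>\<^sub>m F (matrix_unit d i j) + F (entries_on d X S)"
    using insert.hyps(2) unfolding ij
    by (simp add: entries_on_insert cptp_add[OF F _ S] cptp_smult[OF F U] U)
  then show ?case
    using insert ij ab cptp_carrier[OF F U] cptp_carrier[OF F S] by simp
qed

lemma cptp_entry_expansion:
  assumes "cptp d e F" "X \<in> carrier_mat d d" "a < e" "b < e"
  shows "F X $$ (a, b) = (\<Sum>i<d. \<Sum>j<d. X $$ (i, j) * F (matrix_unit d i j) $$ (a, b))"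
  using cptp_entries_on[OF assms(1) _ assms(3,4), of "{..<d} \<times> {..<d}" X] entries_on_all[OF assms(2)]
  by (simp add: sum.cartesian_product)

lemma cptp_psd:
  assumes F: "cptp d e F" and X: "psd d X"
  shows "psd e (F X)"
proof -
  have cX: "X \<in> carrier_mat d d" using X by (rule psd_carrier)
  have "block d X 0 0 = X" unfolding block_def using cX by (intro eq_matI) auto
  then have "ampl 1 d e F X = F X" unfolding ampl_def using cptp_carrier[OF F cX] by (intro eq_matI) auto
  moreover have "psd e (ampl 1 d e F X)" using cptp_ampl_psd[OF F, of 1 X] X by simp
  ultimately show ?thesis by simp
qed

text \<open>\<open>dual_effect d F b\<close> is the Heisenberg-picture effect \<open>F\<^sup>\<dagger>(|b\<rangle>\<langle>b|)\<close>.\<close>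

definition dual_effect :: "nat \<Rightarrow> (complex mat \<Rightarrow> complex mat) \<Rightarrow> nat \<Rightarrow> complex mat" where
  "dual_effect d F b = mat d d (\<lambda>(i, j). F (matrix_unit d j i) $$ (b, b))"

lemma trace_prod_dual_effect:
  assumes F: "cptp d e F" and b: "b < e" and X: "X \<in> carrier_mat d d"
  shows "trace_prod d (dual_effect d F b) X = F X $$ (b, b)"
proof -
  have "trace_prod d (dual_effect d F b) X = (\<Sum>p<d. \<Sum>q<d. X $$ (q, p) * F (matrix_unit d q p) $$ (b, b))"
    unfolding trace_prod_def dual_effect_def by (intro sum.cong refl) (simp add: mult.commute)
  also have "\<dots> = F X $$ (b, b)"
    by (subst sum.swap) (rule cptp_entry_expansion[OF F X b b, symmetric])
  finally show ?thesis .
qed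

lemma psd_dual_effect:
  assumes F: "cptp d e F" and b: "b < e"
  shows "psd d (dual_effect d F b)"
proof (rule psdI)
  show "dual_effect d F b \<in> carrier_mat d d" by (simp add: dual_effect_def)
  fix v
  have "quad_form d (dual_effect d F b) v = F (outer_prod d v) $$ (b, b)"
    unfolding quad_form_eq_trace_prod
    by (rule trace_prod_dual_effect[OF F b]) (simp add: outer_prod_def)
  then show "0 \<le> quad_form d (dual_effect d F b) v"
    using psd_diag_nonneg[OF cptp_psd[OF F psd_outer_prod] b] by simp
qed

lemma dual_effect_complement:
  assumes F: "cptp d 2 F"
  shows "1\<^sub>m d - dual_effect d F 1 = dual_effect d F 0"
proof (rule eq_matI)
  fix i j assume "i < dim_row (dual_effect d F 0)" "j < dim_col (dual_effect d F 0)"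
  then have ij: "i < d" "j < d" by (simp_all add: dual_effect_def)
  have U: "matrix_unit d j i \<in> carrier_mat d d" by (simp add: matrix_unit_def)
  have "mtrace (matrix_unit d j i) = (if i = j then 1 else 0)"
    using ij by (auto simp: mtrace_def matrix_unit_def intro: sum_lessThan_single)
  then have "F (matrix_unit d j i) $$ (0, 0) + F (matrix_unit d j i) $$ (1, 1) = (if i = j then 1 else 0)"
    using cptp_mtrace[OF F U] mtrace_2[OF cptp_carrier[OF F U]] by simp
  then show "(1\<^sub>m d - dual_effect d F 1) $$ (i, j) = dual_effect d F 0 $$ (i, j)"
    using ij by (simp add: dual_effect_def algebra_simps)
qed (simp_all add: dual_effect_def)

section \<open>Work extraction versus hypothesis testing\<close>

lemma dens_psd: "\<rho> \<in> dens d \<Longrightarrow> psd d \<rho>"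
  and dens_carrier: "\<rho> \<in> dens d \<Longrightarrow> \<rho> \<in> carrier_mat d d"
  and dens_mtrace: "\<rho> \<in> dens d \<Longrightarrow> mtrace \<rho> = 1"
  by (simp_all add: dens_def psd_def)

lemma Re_mtrace_complement_dual_effect_le:
  assumes F: "cptp d 2 F" and \<rho>: "\<rho> \<in> dens d"
  shows "Re (mtrace (\<rho> * (1\<^sub>m d - dual_effect d F 1))) \<le> trace_dist (F \<rho>) proj1"
proof -
  have c\<rho>: "\<rho> \<in> carrier_mat d d" using \<rho> by (rule dens_carrier)
  have "mtrace (\<rho> * (1\<^sub>m d - dual_effect d F 1)) = F \<rho> $$ (0, 0)"
    unfolding dual_effect_complement[OF F] using trace_prod_dual_effect[OF F _ c\<rho>, of 0] c\<rho>
    by (simp add: mtrace_mult trace_prod_comm dual_effect_def)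
  then show ?thesis
    using cptp_psd[OF F dens_psd[OF \<rho>]] cptp_mtrace[OF F c\<rho>] dens_mtrace[OF \<rho>]
    by (simp add: Re_entry_le_trace_dist_proj1)
qed

lemma perp_Vspan_iff:
  assumes K: "K \<subseteq> carrier_mat d d" and E: "E \<in> carrier_mat d d"
  shows "perp E (Vspan d K) \<longleftrightarrow> (\<forall>\<tau>\<in>K. \<forall>\<tau>'\<in>K. trace_prod d E \<tau> = trace_prod d E \<tau>')"
proof (intro iffI ballI)
  fix \<tau> \<tau>' assume perp: "perp E (Vspan d K)" and \<tau>: "\<tau> \<in> K" and \<tau>': "\<tau>' \<in> K"
  have c\<tau>: "\<tau> \<in> carrier_mat d d" and c\<tau>': "\<tau>' \<in> carrier_mat d d" using K \<tau> \<tau>' by auto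
  have "trace_prod d E \<tau> - trace_prod d E \<tau>' = mtrace (E * (\<tau> - \<tau>'))"
    by (simp add: mtrace_mult[OF E minus_carrier_mat[OF c\<tau>']] trace_prod_minus[OF c\<tau> c\<tau>'])
  also have "\<dots> = 0" using perp Vspan.diff[OF \<tau> \<tau>'] unfolding perp_def by blast
  finally show "trace_prod d E \<tau> = trace_prod d E \<tau>'" by simp
next
  assume const: "\<forall>\<tau>\<in>K. \<forall>\<tau>'\<in>K. trace_prod d E \<tau> = trace_prod d E \<tau>'"
  have span: "X \<in> carrier_mat d d \<and> trace_prod d E X = 0" if "X \<in> Vspan d K" for X
    using that
  proof (induction rule: Vspan.induct)
    case zero
    show ?case by (simp add: trace_prod_zero)
  next
    case (diff \<tau> \<tau>')
    then have "\<tau> \<in> carrier_mat d d" "\<tau>' \<in> carrier_mat d d" using K by auto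
    moreover have "trace_prod d E \<tau> = trace_prod d E \<tau>'" using const diff by blast
    ultimately show ?case by (simp add: minus_carrier_mat trace_prod_minus)
  next
    case (add X Y)
    then show ?case by (simp add: trace_prod_add)
  next
    case (smult X c)
    then show ?case by (simp add: trace_prod_smult)
  qed
  show "perp E (Vspan d K)"
    unfolding perp_def using span mtrace_mult[OF E] by simp
qed

lemma sup_tr_nonneg: "0 \<le> sup_tr Es E"
  unfolding sup_tr_def by (rule Sup_upper) simp

lemma sup_tr_upper: "\<tau> \<in> Es \<Longrightarrow> ereal (Re (mtrace (\<tau> * E))) \<le> sup_tr Es E"
  unfolding sup_tr_def by (rule Sup_upper) blast

lemma sup_tr_least: "0 \<le> c \<Longrightarrow> (\<And>\<tau>. \<tau> \<in> Es \<Longrightarrow> Re (mtrace (\<tau> * E)) \<le> c) \<Longrightarrow> sup_tr Es E \<le> ereal c"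
  unfolding sup_tr_def by (rule Sup_least) auto

lemma piM_eq: "piM M = mat 2 2 (\<lambda>(i, j). if i = j then if i = 0 then 1 - 1 / M else 1 / M else 0)"
  by (auto intro!: eq_matI simp: piM_def proj0_def proj1_def)

lemma gpo_M_imp_feasible:
  assumes M: "M \<in> gpo_M d eps Ps Es" and Ps: "Ps \<subseteq> dens d" and Es: "Es \<subseteq> dens d"
  shows "\<exists>E \<in> Dmin_feasible d eps Ps Es. sup_tr Es E \<le> ereal (1 / M)"
proof -
  obtain F where M1: "M > 1" and F: "cptp d 2 F"
    and err: "\<And>\<rho>. \<rho> \<in> Ps \<Longrightarrow> trace_dist (F \<rho>) proj1 \<le> eps"
    and gibbs: "\<And>\<tau>. \<tau> \<in> Es \<Longrightarrow> F \<tau> = piM M"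
    using M unfolding gpo_M_def by blast
  define E where "E = dual_effect d F 1"
  have cE: "E \<in> carrier_mat d d" by (simp add: E_def dual_effect_def)
  have complement: "1\<^sub>m d - E = dual_effect d F 0" unfolding E_def by (rule dual_effect_complement[OF F])
  have Es_carrier: "Es \<subseteq> carrier_mat d d" using Es dens_carrier by blast
  have tr_tau: "trace_prod d E \<tau> = complex_of_real (1 / M)" if "\<tau> \<in> Es" for \<tau>
  proof -
    have "trace_prod d E \<tau> = F \<tau> $$ (1, 1)"
      unfolding E_def using that Es_carrier by (intro trace_prod_dual_effect[OF F]) auto
    then show ?thesis using gibbs[OF that] by (simp add: piM_eq)
  qed
  have "perp E (Vspan d Es)"
    using tr_tau by (simp add: perp_Vspan_iff[OF Es_carrier cE])
  moreover have "Re (mtrace (\<rho> * (1\<^sub>m d - E))) \<le> eps" if "\<rho> \<in> Ps" for \<rho>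
    using Re_mtrace_complement_dual_effect_le[OF F] err that Ps unfolding E_def by (meson order.trans subsetD)
  moreover have "psd d E" unfolding E_def by (rule psd_dual_effect[OF F]) simp
  moreover have "psd d (1\<^sub>m d - E)" unfolding complement by (rule psd_dual_effect[OF F]) simp
  ultimately have "E \<in> Dmin_feasible d eps Ps Es"
    unfolding Dmin_feasible_def by blast
  moreover have "sup_tr Es E \<le> ereal (1 / M)"
  proof (rule sup_tr_least)
    fix \<tau> assume \<tau>: "\<tau> \<in> Es"
    then have "mtrace (\<tau> * E) = trace_prod d E \<tau>"
      using Es_carrier cE by (auto simp: mtrace_mult trace_prod_comm)
    then show "Re (mtrace (\<tau> * E)) \<le> 1 / M" using tr_tau[OF \<tau>] by simp
  qed (use M1 in simp)
  ultimately show ?thesis by blast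
qed

definition binary_povm :: "nat \<Rightarrow> complex mat \<Rightarrow> nat \<Rightarrow> complex mat" where
  "binary_povm d G r = (if r = 0 then 1\<^sub>m d - G else G)"

lemma cptp_binary_measurement:
  assumes G: "psd d G" and IG: "psd d (1\<^sub>m d - G)"
  shows "cptp d 2 (qc_channel d 2 (binary_povm d G))"
proof (rule cptp_qc_channel)
  show "psd d (binary_povm d G r)" for r using G IG by (simp add: binary_povm_def)
  show "(\<Sum>r<2. trace_prod d (binary_povm d G r) X) = mtrace X" if "X \<in> carrier_mat d d" for X
    using trace_prod_one_minus[OF psd_carrier[OF G] that] by (simp add: binary_povm_def numeral_2_eq_2)
qed

lemma gpo_M_if_effect:
  assumes G: "psd d G" and IG: "psd d (1\<^sub>m d - G)" and M: "M > 1"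
    and Ps: "Ps \<subseteq> dens d" and Es: "Es \<subseteq> dens d"
    and gibbs: "\<And>\<tau>. \<tau> \<in> Es \<Longrightarrow> trace_prod d G \<tau> = complex_of_real (1 / M)"
    and err: "\<And>\<rho>. \<rho> \<in> Ps \<Longrightarrow> Re (trace_prod d (1\<^sub>m d - G) \<rho>) \<le> eps"
  shows "M \<in> gpo_M d eps Ps Es"
proof -
  define F where "F = qc_channel d 2 (binary_povm d G)"
  have F: "cptp d 2 F" unfolding F_def by (rule cptp_binary_measurement[OF G IG])
  have cG: "G \<in> carrier_mat d d" using G by (rule psd_carrier)
  have "F \<tau> = piM M" if \<tau>: "\<tau> \<in> Es" for \<tau>
  proof -
    have "\<tau> \<in> carrier_mat d d" "mtrace \<tau> = 1" using \<tau> Es by (auto simp: dens_carrier dens_mtrace)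
    then show ?thesis
      using gibbs[OF \<tau>] trace_prod_one_minus[OF cG]
      by (auto intro!: eq_matI simp: F_def qc_channel_def binary_povm_def piM_eq)
  qed
  moreover have "trace_dist (F \<rho>) proj1 \<le> eps" if \<rho>: "\<rho> \<in> Ps" for \<rho>
  proof -
    have d\<rho>: "psd d \<rho>" "\<rho> \<in> carrier_mat d d" "mtrace \<rho> = 1"
      using \<rho> Ps by (auto simp: dens_psd dens_carrier dens_mtrace)
    have "0 \<le> trace_prod d (1\<^sub>m d - G) \<rho>" by (rule trace_prod_psd_nonneg[OF IG d\<rho>(1)])
    then have "trace_dist (F \<rho>) proj1 = Re (trace_prod d (1\<^sub>m d - G) \<rho>)"
      using cptp_psd[OF F d\<rho>(1)] cptp_mtrace[OF F d\<rho>(2)] d\<rho>(3)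
      by (simp add: trace_dist_proj1 F_def qc_channel_def binary_povm_def complex_nonneg_iff)
    then show ?thesis using err[OF \<rho>] by simp
  qed
  ultimately show ?thesis unfolding gpo_M_def using M F by blast
qed

lemma Dmin_feasible_trace_const:
  assumes E: "E \<in> Dmin_feasible d eps Ps Es" and Es: "Es \<subseteq> dens d"
  shows "\<exists>c. 0 \<le> c \<and> ereal c \<le> sup_tr Es E \<and> (\<forall>\<tau>\<in>Es. trace_prod d E \<tau> = c)"
proof (cases "Es = {}")
  case True
  then show ?thesis using sup_tr_nonneg[of Es E] by (intro exI[of _ 0]) (simp add: zero_ereal_def)
next
  case False
  then obtain \<tau>0 where \<tau>0: "\<tau>0 \<in> Es" by blast
  have pE: "psd d E" and perp: "perp E (Vspan d Es)"
    using E by (auto simp: Dmin_feasible_def)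
  have Es_carrier: "Es \<subseteq> carrier_mat d d" using Es dens_carrier by blast
  have "\<forall>\<tau>\<in>Es. \<forall>\<tau>'\<in>Es. trace_prod d E \<tau> = trace_prod d E \<tau>'"
    using perp perp_Vspan_iff[OF Es_carrier psd_carrier[OF pE]] by blast
  then have const: "trace_prod d E \<tau> = trace_prod d E \<tau>0" if "\<tau> \<in> Es" for \<tau>
    using that \<tau>0 by blast
  have nonneg: "0 \<le> trace_prod d E \<tau>0"
    using \<tau>0 Es by (intro trace_prod_psd_nonneg[OF pE]) (auto simp: dens_psd)
  have "mtrace (\<tau>0 * E) = trace_prod d E \<tau>0"
    using \<tau>0 Es_carrier psd_carrier[OF pE] by (auto simp: mtrace_mult trace_prod_comm)
  then have "ereal (Re (trace_prod d E \<tau>0)) \<le> sup_tr Es E"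
    using sup_tr_upper[OF \<tau>0, of E] by simp
  then show ?thesis
    using const nonneg by (intro exI[of _ "Re (trace_prod d E \<tau>0)"]) (auto simp: complex_nonneg_iff complex_eq_iff)
qed

lemma gpo_M_if_trace_const:
  fixes c :: real
  assumes pE: "psd d E" and pIE: "psd d (1\<^sub>m d - E)" and M: "M > 1"
    and Ps: "Ps \<subseteq> dens d" and Es: "Es \<subseteq> dens d" and eps: "0 \<le> eps"
    and c: "0 \<le> c" "c < 1 / M" and const: "\<And>\<tau>. \<tau> \<in> Es \<Longrightarrow> trace_prod d E \<tau> = c"
    and err: "\<And>\<rho>. \<rho> \<in> Ps \<Longrightarrow> Re (trace_prod d (1\<^sub>m d - E) \<rho>) \<le> eps"
  shows "M \<in> gpo_M d eps Ps Es"
proof -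
  have cE: "E \<in> carrier_mat d d" using pE by (rule psd_carrier)
  \<comment> \<open>Mixing \<open>E\<close> with the identity raises the constant value \<open>tr[\<tau> E] = c\<close> to exactly \<open>1/M\<close>, while
      the error \<open>tr[\<rho> (I - E)]\<close> only shrinks by the factor \<open>\<alpha> \<le> 1\<close>.\<close>
  define \<alpha> where "\<alpha> = (1 - 1 / M) / (1 - c)"
  have "1 / M < 1" using M by simp
  then have "0 < 1 - c" using c by linarith
  have "0 \<le> \<alpha>" unfolding \<alpha>_def using \<open>1 / M < 1\<close> \<open>0 < 1 - c\<close> by (intro divide_nonneg_nonneg) simp_all
  moreover have "\<alpha> \<le> 1" unfolding \<alpha>_def using c \<open>0 < 1 - c\<close> by (simp add: divide_le_eq_1)
  moreover have "\<alpha> * (1 - c) = 1 - 1 / M" unfolding \<alpha>_def using \<open>0 < 1 - c\<close> by simp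
  ultimately have \<alpha>: "0 \<le> \<alpha>" "\<alpha> \<le> 1" "\<alpha> * (1 - c) = 1 - 1 / M" by blast+
  define G where "G = complex_of_real \<alpha> \<cdot>\<^sub>m E + complex_of_real (1 - \<alpha>) \<cdot>\<^sub>m 1\<^sub>m d"
  have IG: "1\<^sub>m d - G = complex_of_real \<alpha> \<cdot>\<^sub>m (1\<^sub>m d - E)"
    unfolding G_def using cE by (intro eq_matI) (auto simp: algebra_simps)
  show ?thesis
  proof (rule gpo_M_if_effect[OF _ _ M Ps Es])
    show "psd d G" unfolding G_def using \<alpha> by (intro psd_add psd_smult pE psd_one) (auto simp: less_eq_complex_def)
    show "psd d (1\<^sub>m d - G)" unfolding IG using \<alpha> by (intro psd_smult pIE) (auto simp: less_eq_complex_def)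
  next
    fix \<tau> assume \<tau>: "\<tau> \<in> Es"
    then have "\<tau> \<in> carrier_mat d d" "mtrace \<tau> = 1" using Es by (auto simp: dens_carrier dens_mtrace)
    then have "trace_prod d G \<tau> = complex_of_real (\<alpha> * c + (1 - \<alpha>))"
      using const[OF \<tau>] cE unfolding G_def
      by (simp add: trace_prod_add_left trace_prod_smult_left trace_prod_one)
    moreover have "\<alpha> * c + (1 - \<alpha>) = 1 / M" using \<alpha>(3) by (simp add: algebra_simps)
    ultimately show "trace_prod d G \<tau> = complex_of_real (1 / M)" by simp
  next
    fix \<rho> assume \<rho>: "\<rho> \<in> Ps"
    have "Re (trace_prod d (1\<^sub>m d - G) \<rho>) = \<alpha> * Re (trace_prod d (1\<^sub>m d - E) \<rho>)"
      unfolding IG using cE by (simp add: trace_prod_smult_left minus_carrier_mat)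
    also have "\<dots> \<le> \<alpha> * eps" using err[OF \<rho>] \<alpha> by (intro mult_left_mono) auto
    also have "\<dots> \<le> eps" using \<alpha> eps by (simp add: mult_left_le_one_le)
    finally show "Re (trace_prod d (1\<^sub>m d - G) \<rho>) \<le> eps" .
  qed
qed

lemma gpo_M_if_feasible:
  assumes E: "E \<in> Dmin_feasible d eps Ps Es" and M: "M > 1" and less: "sup_tr Es E < ereal (1 / M)"
    and Ps: "Ps \<subseteq> dens d" and Es: "Es \<subseteq> dens d" and eps: "0 \<le> eps"
  shows "M \<in> gpo_M d eps Ps Es"
proof -
  have pE: "psd d E" and pIE: "psd d (1\<^sub>m d - E)"
    and err: "\<And>\<rho>. \<rho> \<in> Ps \<Longrightarrow> Re (mtrace (\<rho> * (1\<^sub>m d - E))) \<le> eps"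
    using E by (auto simp: Dmin_feasible_def)
  obtain c where c: "0 \<le> c" "ereal c \<le> sup_tr Es E" and const: "\<And>\<tau>. \<tau> \<in> Es \<Longrightarrow> trace_prod d E \<tau> = c"
    using Dmin_feasible_trace_const[OF E Es] by blast
  have "ereal c < ereal (1 / M)" using c(2) less by (rule le_less_trans)
  moreover have "trace_prod d (1\<^sub>m d - E) \<rho> = mtrace (\<rho> * (1\<^sub>m d - E))" if "\<rho> \<in> Ps" for \<rho>
  proof -
    have "\<rho> \<in> carrier_mat d d" using that Ps dens_carrier by blast
    then show ?thesis using psd_carrier[OF pIE] by (simp add: mtrace_mult trace_prod_comm)
  qed
  ultimately show ?thesis
    using gpo_M_if_trace_const[OF pE pIE M Ps Es eps c(1) _ const] err by simp
qed

lemma one_mat_Dmin_feasible: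
  assumes Ps: "Ps \<subseteq> dens d" and Es: "Es \<subseteq> dens d" and eps: "0 \<le> eps"
  shows "1\<^sub>m d \<in> Dmin_feasible d eps Ps Es" and "sup_tr Es (1\<^sub>m d) \<le> 1"
proof -
  have Es_carrier: "Es \<subseteq> carrier_mat d d" using Es dens_carrier by blast
  have tr: "trace_prod d (1\<^sub>m d) \<tau> = 1" if "\<tau> \<in> Es" for \<tau>
    using that Es by (auto simp: trace_prod_one dens_carrier dens_mtrace)
  have zero: "1\<^sub>m d - 1\<^sub>m d = (0\<^sub>m d d :: complex mat)" by (rule minus_r_inv_mat) simp
  have "perp (1\<^sub>m d) (Vspan d Es)"
    using tr by (simp add: perp_Vspan_iff[OF Es_carrier one_carrier_mat])
  moreover have "Re (mtrace (\<rho> * (1\<^sub>m d - 1\<^sub>m d))) \<le> eps" if "\<rho> \<in> Ps" for \<rho>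
  proof -
    have "\<rho> \<in> carrier_mat d d" using that Ps dens_carrier by blast
    then show ?thesis using eps by (simp add: zero mtrace_def)
  qed
  ultimately show "1\<^sub>m d \<in> Dmin_feasible d eps Ps Es"
    unfolding Dmin_feasible_def by (simp add: zero psd_one psd_zero)
  have "sup_tr Es (1\<^sub>m d) \<le> ereal 1"
  proof (rule sup_tr_least)
    fix \<tau> assume "\<tau> \<in> Es"
    then have \<tau>: "\<tau> \<in> dens d" using Es by blast
    then show "Re (mtrace (\<tau> * 1\<^sub>m d)) \<le> 1" using dens_carrier[OF \<tau>] dens_mtrace[OF \<tau>] by simp
  qed simp
  then show "sup_tr Es (1\<^sub>m d) \<le> 1" by (simp add: one_ereal_def)
qed

section \<open>Comparing the optimal values\<close>

lemma elog_inverse_eq_eneglog: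
  assumes "0 \<le> m" "m \<noteq> \<infinity>"
  shows "elog (inverse m) = eneglog m"
proof (cases "m = 0")
  case True
  then show ?thesis by (simp add: elog_def eneglog_def)
next
  case False
  with assms obtain \<mu> where "m = ereal \<mu>" "0 < \<mu>" by (cases m) auto
  then show ?thesis by (simp add: elog_def eneglog_def log_inverse)
qed

lemma ereal_le_inverse_iff:
  assumes "0 \<le> m" "0 < M"
  shows "ereal M \<le> inverse m \<longleftrightarrow> m \<le> ereal (1 / M)"
    and "ereal M < inverse m \<longleftrightarrow> m < ereal (1 / M)"
  using assms by (cases m; auto simp: field_simps)+

lemma Sup_threshold_eq_inverse:
  fixes A :: "real set" and m :: ereal
  assumes A: "A \<subseteq> {1<..}" and m: "0 \<le> m" "m \<le> 1"
    and upper: "\<And>M. M \<in> A \<Longrightarrow> m \<le> ereal (1 / M)"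
    and lower: "\<And>M. 1 < M \<Longrightarrow> m < ereal (1 / M) \<Longrightarrow> M \<in> A"
  shows "Sup ({1} \<union> ereal ` A) = inverse m"
proof (rule antisym)
  have "ereal 1 \<le> inverse m" using m by (subst ereal_le_inverse_iff) (simp_all add: one_ereal_def)
  moreover have "ereal M \<le> inverse m" if "M \<in> A" for M
    using that A upper m by (subst ereal_le_inverse_iff) auto
  ultimately show "Sup ({1} \<union> ereal ` A) \<le> inverse m"
    by (auto intro!: Sup_least simp: one_ereal_def)
next
  show "inverse m \<le> Sup ({1} \<union> ereal ` A)"
  proof (rule dense_le)
    fix y assume y: "y < inverse m"
    show "y \<le> Sup ({1} \<union> ereal ` A)"
    proof (cases "y \<le> 1")
      case True
      then show ?thesis by (meson Sup_upper UnCI insertI1 order.trans)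
    next
      case False
      with y obtain N where N: "y = ereal N" "1 < N" by (cases y) auto
      then have "N \<in> A" using y m by (intro lower) (auto simp: ereal_le_inverse_iff)
      then show ?thesis using N(1) by (blast intro: Sup_upper)
    qed
  qed
qed

theorem theorem4:
  fixes d :: nat and eps :: real and Ps Es :: "complex mat set"
  assumes "0 \<le> eps" and "eps < 1"
    and "Ps \<subseteq> dens d" and "Es \<subseteq> dens d"
  shows "betaW_GPO d eps Ps Es = Dmin d eps Ps Es Es"
proof -
  note eps = assms(1) and Ps = assms(3) and Es = assms(4)
  define m where "m = Inf (sup_tr Es ` Dmin_feasible d eps Ps Es)"
  have m_le: "m \<le> sup_tr Es E" if "E \<in> Dmin_feasible d eps Ps Es" for E
    unfolding m_def using that by (rule INF_lower)
  have "0 \<le> m" unfolding m_def by (rule INF_greatest) (rule sup_tr_nonneg)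
  moreover have "m \<le> 1"
    using m_le[OF one_mat_Dmin_feasible(1)[OF Ps Es eps]] one_mat_Dmin_feasible(2)[OF Ps Es eps] by (rule order.trans)
  moreover have sup: "Sup ({1} \<union> ereal ` gpo_M d eps Ps Es) = inverse m"
  proof (rule Sup_threshold_eq_inverse[OF _ \<open>0 \<le> m\<close> \<open>m \<le> 1\<close>])
    show "gpo_M d eps Ps Es \<subseteq> {1<..}" by (auto simp: gpo_M_def)
    show "m \<le> ereal (1 / M)" if "M \<in> gpo_M d eps Ps Es" for M
      using gpo_M_imp_feasible[OF that Ps Es] m_le order.trans by blast
    show "M \<in> gpo_M d eps Ps Es" if "1 < M" "m < ereal (1 / M)" for M
    proof -
      obtain E where "E \<in> Dmin_feasible d eps Ps Es" "sup_tr Es E < ereal (1 / M)"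
        using \<open>m < ereal (1 / M)\<close> unfolding m_def by (auto simp: INF_less_iff)
      then show ?thesis using gpo_M_if_feasible \<open>1 < M\<close> Ps Es eps by blast
    qed
  qed
  ultimately show ?thesis
    unfolding betaW_GPO_def Dmin_def m_def[symmetric] sup by (intro elog_inverse_eq_eneglog) auto
qed

end
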